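(* For every integer $k\ge 2$ there exists a $k$-januarial of simple type with $h=1$, i.e. whose common graph $\Upsilon$ is a single simple circuit.
   Context: Let $\Delta(2,k,\ell)=\langle x,y:x^2=y^k=(xy)^\ell=1\rangle$, acting on a finite set $S$. The coset graph has: - vertex set $S$; - an undirected $x$-edge joining each pair of points transposed by $x$; - a directed $y$-edge $u\to uy$. It is $2$-cell embedded in a closed orientable surface via the rotation system (incoming $y$-edge, outgoing $y$-edge, $x$-edge) at each vertex. The faces are $y$-faces and $xy$-faces; this is the coset diagram. A $k$-januarial is the coset diagram of an action of $\Delta(2,k,\ell)$, for some $\ell$, in which $\langle xy\rangle$ has exactly two orbits, each of size $|S|/2$. Let $S_1,S_2$ be the closures of its two $xy$-faces. Collapsing each $y$-face to a point gives the companion diagram, with images $S_i'$ of $S_i$. The common graph is $\Upsilon=S_1'\cap S_2'$. The januarial is of simple type if $\Upsilon$ is a union of $h$ pairwise disjoint simple circuits. *)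

theory Defs
  imports Main
begin

text \<open>Points of S are naturals. Right actions: u.x = x u, u.(xy) = y (x u).\<close>

definition orb :: "(nat \<Rightarrow> nat) \<Rightarrow> nat \<Rightarrow> nat set" where
  "orb f u = {(f ^^ n) u | n. True}"

definition triangle_action :: "nat \<Rightarrow> nat \<Rightarrow> nat set \<Rightarrow> (nat \<Rightarrow> nat) \<Rightarrow> (nat \<Rightarrow> nat) \<Rightarrow> bool" where
  "triangle_action k l S x y \<longleftrightarrow>
     finite S \<and> bij_betw x S S \<and> bij_betw y S S \<and>
     (\<forall>u\<in>S. x (x u) = u) \<and> (\<forall>u\<in>S. (y ^^ k) u = u) \<and> (\<forall>u\<in>S. ((y \<circ> x) ^^ l) u = u)"

definition transitive_action :: "nat set \<Rightarrow> (nat \<Rightarrow> nat) \<Rightarrow> (nat \<Rightarrow> nat) \<Rightarrow> bool" where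
  "transitive_action S x y \<longleftrightarrow> S \<noteq> {} \<and>
     (\<forall>u\<in>S. \<forall>v\<in>S. (u, v) \<in> ({(w, x w) | w. w \<in> S} \<union> {(w, y w) | w. w \<in> S})\<^sup>*)"

definition xy_orbits :: "nat set \<Rightarrow> (nat \<Rightarrow> nat) \<Rightarrow> (nat \<Rightarrow> nat) \<Rightarrow> nat set set" where
  "xy_orbits S x y = {orb (y \<circ> x) u | u. u \<in> S}"

definition januarial :: "nat \<Rightarrow> nat set \<Rightarrow> (nat \<Rightarrow> nat) \<Rightarrow> (nat \<Rightarrow> nat) \<Rightarrow> bool" where
  "januarial k S x y \<longleftrightarrow>
     (\<exists>l>0. triangle_action k l S x y) \<and> transitive_action S x y \<and>
     card (xy_orbits S x y) = 2 \<and>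
     (\<forall>Q\<in>xy_orbits S x y. 2 * card Q = card S)"

text \<open>Companion diagram: vertices are the y-orbits (collapsed y-faces); edges are the x-edges
  {u, u.x}; the ends of an x-edge are the y-orbits of its points.
  The closure of the xy-face of the xy-orbit O contains the points of O and O.x and the
  x-edges {v, v.x} with v in O; its image in the companion diagram has vertex set
  {orb y v | v in O} and edge set {{v, x v} | v in O}.\<close>
definition face_vertices :: "(nat \<Rightarrow> nat) \<Rightarrow> nat set \<Rightarrow> nat set set" where
  "face_vertices y Q = {orb y v | v. v \<in> Q}"

definition face_edges :: "(nat \<Rightarrow> nat) \<Rightarrow> nat set \<Rightarrow> nat set set" where
  "face_edges x Q = {{v, x v} | v. v \<in> Q}"

definition edge_ends :: "(nat \<Rightarrow> nat) \<Rightarrow> nat set \<Rightarrow> nat set set" where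
  "edge_ends y e = {orb y w | w. w \<in> e}"

definition simple_circuit :: "'v set \<Rightarrow> 'e set \<Rightarrow> ('e \<Rightarrow> 'v set) \<Rightarrow> bool" where
  "simple_circuit V E ends \<longleftrightarrow>
     (\<exists>n::nat. \<exists>vs es. n \<ge> 1 \<and> inj_on vs {..<n} \<and> inj_on es {..<n} \<and>
        V = vs ` {..<n} \<and> E = es ` {..<n} \<and>
        (\<forall>i<n. ends (es i) = {vs i, vs (Suc i mod n)}))"

definition common_vertices :: "(nat \<Rightarrow> nat) \<Rightarrow> nat set \<Rightarrow> nat set \<Rightarrow> nat set set" where
  "common_vertices y O1 O2 = face_vertices y O1 \<inter> face_vertices y O2"

definition common_edges :: "(nat \<Rightarrow> nat) \<Rightarrow> nat set \<Rightarrow> nat set \<Rightarrow> nat set set" where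
  "common_edges x O1 O2 = face_edges x O1 \<inter> face_edges x O2"

definition januarial_simple_h1 :: "nat \<Rightarrow> nat set \<Rightarrow> (nat \<Rightarrow> nat) \<Rightarrow> (nat \<Rightarrow> nat) \<Rightarrow> bool" where
  "januarial_simple_h1 k S x y \<longleftrightarrow> januarial k S x y \<and>
     (\<exists>O1 O2. O1 \<in> xy_orbits S x y \<and> O2 \<in> xy_orbits S x y \<and> O1 \<noteq> O2 \<and>
        simple_circuit (common_vertices y O1 O2) (common_edges x O1 O2) (edge_ends y))"

end

theory Submission
  imports Defs
begin

text \<open>Take S = {0, ..., 2k - 1}, let y be the product of the two k-cycles (0 1 ... k-1) and
  (k k+1 ... 2k-1), and let x = (0 k)(1 k+1). Then xy is again a product of two k-cycles,
  (0 k+1 2 3 ... k-1) and (k 1 k+2 k+3 ... 2k-1), each of which meets both y-cycles. All other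
  points are fixed by x, so the only x-edges lying on both xy-faces are {0, k} and {1, k+1}.
  Both join the two collapsed y-faces, hence the common graph is a circuit of length 2.\<close>

lemma funpow_along_cycle:
  assumes cycle: "\<forall>i<m. f (\<phi> i) = \<phi> (Suc i mod m)" and "j < m"
  shows "(f ^^ n) (\<phi> j) = \<phi> ((j + n) mod m)"
proof (induction n)
  case 0
  then show ?case using \<open>j < m\<close> by simp
next
  case (Suc n)
  have "(f ^^ Suc n) (\<phi> j) = \<phi> (Suc ((j + n) mod m) mod m)"
    using Suc cycle \<open>j < m\<close> by simp
  also have "\<dots> = \<phi> ((j + Suc n) mod m)"
    by (simp add: mod_Suc_eq)
  finally show ?case .
qed

lemma funpow_cycle_length:
  assumes "\<forall>i<m. f (\<phi> i) = \<phi> (Suc i mod m)" and "j < m"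
  shows "(f ^^ m) (\<phi> j) = \<phi> j"
  using funpow_along_cycle[OF assms, of m] \<open>j < m\<close> by simp

lemma orb_cycle:
  assumes "\<forall>i<m. f (\<phi> i) = \<phi> (Suc i mod m)" and "j < m"
  shows "orb f (\<phi> j) = \<phi> ` {..<m}"
proof
  show "orb f (\<phi> j) \<subseteq> \<phi> ` {..<m}"
    unfolding orb_def using funpow_along_cycle[OF assms] \<open>j < m\<close> by auto
  show "\<phi> ` {..<m} \<subseteq> orb f (\<phi> j)"
  proof
    fix u assume "u \<in> \<phi> ` {..<m}"
    then obtain i where "i < m" "u = \<phi> i" by auto
    then have "u = (f ^^ (i + m - j)) (\<phi> j)"
      using funpow_along_cycle[OF assms, of "i + m - j"] \<open>j < m\<close> by simp
    then show "u \<in> orb f (\<phi> j)" unfolding orb_def by blast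
  qed
qed

lemma funpow_closed:
  assumes "f ` S \<subseteq> S" and "u \<in> S"
  shows "(f ^^ n) u \<in> S"
  using assms by (induction n) auto

lemma bij_betw_if_funpow_id:
  assumes "f ` S \<subseteq> S" and "\<forall>u\<in>S. (f ^^ m) u = u" and "0 < m"
  shows "bij_betw f S S"
proof (rule bij_betw_byWitness[where f' = "f ^^ (m - 1)"])
  have "f ^^ m = f ^^ (m - 1) \<circ> f" "f ^^ m = f \<circ> f ^^ (m - 1)"
    using \<open>0 < m\<close> by (metis Suc_diff_1 funpow_Suc_right, metis Suc_diff_1 funpow.simps(2))
  then show "\<forall>u\<in>S. (f ^^ (m - 1)) (f u) = u" "\<forall>u\<in>S. f ((f ^^ (m - 1)) u) = u"
    using assms(2) by (metis comp_apply)+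
  show "f ` S \<subseteq> S" "(f ^^ (m - 1)) ` S \<subseteq> S"
    using funpow_closed[OF assms(1)] assms(1) by auto
qed

lemma orb_in_rtrancl:
  assumes "f ` S \<subseteq> S" and "\<forall>w\<in>S. (w, f w) \<in> R" and "u \<in> S" and "v \<in> orb f u"
  shows "(u, v) \<in> R\<^sup>*"
proof -
  obtain n where "v = (f ^^ n) u" using \<open>v \<in> orb f u\<close> unfolding orb_def by blast
  moreover have "(u, (f ^^ n) u) \<in> R\<^sup>*" for n
  proof (induction n)
    case (Suc n)
    have "((f ^^ n) u, (f ^^ Suc n) u) \<in> R"
      using assms(2) funpow_closed[OF assms(1,3)] by simp
    with Suc show ?case by (rule rtrancl_into_rtrancl)
  qed simp
  ultimately show ?thesis by simp
qed

lemma simple_circuit_two_edges: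
  assumes "u \<noteq> v" and "e \<noteq> e'" and "ends e = {u, v}" and "ends e' = {u, v}"
  shows "simple_circuit {u, v} {e, e'} ends"
proof -
  have two: "{..<2::nat} = {0, 1}" by auto
  let ?vs = "\<lambda>i::nat. if i = 0 then u else v"
  let ?es = "\<lambda>i::nat. if i = 0 then e else e'"
  have "inj_on ?vs {..<2}" "inj_on ?es {..<2}"
    "{u, v} = ?vs ` {..<2}" "{e, e'} = ?es ` {..<2}"
    using assms unfolding two by auto
  moreover have "\<forall>i<2. ends (?es i) = {?vs i, ?vs (Suc i mod 2)}"
    using assms by (auto simp: less_2_cases_iff insert_commute)
  ultimately
  show ?thesis unfolding simple_circuit_def by (intro exI[of _ 2] exI[of _ ?vs] exI[of _ ?es]) simp
qed

definition januarial_y :: "nat \<Rightarrow> nat \<Rightarrow> nat" where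
  "januarial_y k u = (if Suc u = k then 0 else if Suc u = 2 * k then k else Suc u)"

definition januarial_x :: "nat \<Rightarrow> nat \<Rightarrow> nat" where
  "januarial_x k u =
     (if u = 0 then k else if u = k then 0 else if u = 1 then Suc k else if u = Suc k then 1 else u)"

text \<open>For b \<in> {0, k}, the map j \<mapsto> xy_cycle k b j (j < k) lists the xy-orbit of b in
  cyclic order.\<close>

definition xy_cycle :: "nat \<Rightarrow> nat \<Rightarrow> nat \<Rightarrow> nat" where
  "xy_cycle k b j = (if j = 1 then k - b + 1 else b + j)"

context
  fixes k :: nat
  assumes two_le_k: "2 \<le> k"
begin

lemma januarial_y_on_block:
  assumes "b \<in> {0, k}"
  shows "\<forall>j<k. januarial_y k (b + j) = b + Suc j mod k"
  using assms by (auto simp: januarial_y_def)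

lemma januarial_xy_on_xy_cycle:
  assumes "b \<in> {0, k}"
  shows "\<forall>j<k. (januarial_y k \<circ> januarial_x k) (xy_cycle k b j) = xy_cycle k b (Suc j mod k)"
proof (intro allI impI)
  fix j assume "j < k"
  then consider "j = 0" | "j = 1" "Suc j < k" | "2 \<le> j" "Suc j < k" | "j = 1" "k = 2" | "2 \<le> j" "k = Suc j"
    using two_le_k by linarith
  then show "(januarial_y k \<circ> januarial_x k) (xy_cycle k b j) = xy_cycle k b (Suc j mod k)"
    using assms two_le_k by cases (auto simp: januarial_y_def januarial_x_def xy_cycle_def)
qed

lemma xy_cycle_image:
  assumes "b \<in> {0, k}"
  shows "xy_cycle k b ` {..<k} = {b, k - b + 1} \<union> {b + 2..<b + k}"
proof -
  have split: "{..<k} = insert 0 (insert 1 {2..<k})"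
    using two_le_k by auto
  have shift: "xy_cycle k b ` {2..<k} = (+) b ` {2..<k}"
    by (rule image_cong) (auto simp: xy_cycle_def)
  have "xy_cycle k b ` {..<k} = insert (xy_cycle k b 0) (insert (xy_cycle k b 1) ((+) b ` {2..<k}))"
    unfolding split image_insert shift ..
  also have "\<dots> = {b, k - b + 1} \<union> {b + 2..<b + k}"
    by (simp add: xy_cycle_def add.commute)
  finally show ?thesis .
qed

lemma lessThan_double_eq_xy_cycle_images:
  "{..<2 * k} = xy_cycle k 0 ` {..<k} \<union> xy_cycle k k ` {..<k}"
proof -
  have "u \<in> {0, k + 1} \<union> {2..<k} \<union> ({k, 1} \<union> {k + 2..<2 * k})" if "u < 2 * k" for u
  proof -
    consider "u \<le> 1" | "2 \<le> u" "u < k" | "k \<le> u" "u \<le> k + 1" | "k + 2 \<le> u"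
      by linarith
    then show ?thesis using that by cases auto
  qed
  moreover have "{0, k + 1} \<union> {2..<k} \<union> ({k, 1} \<union> {k + 2..<2 * k}) \<subseteq> {..<2 * k}"
    using two_le_k by auto
  ultimately show ?thesis
    using xy_cycle_image[of 0] xy_cycle_image[of k] by (auto simp: mult_2)
qed

lemma below_double_cases:
  assumes "u < 2 * k"
  obtains b j where "b \<in> {0, k}" "j < k" "u = b + j"
  using assms that[of 0 u] that[of k "u - k"] by (cases "u < k") auto

lemma below_double_xy_cycle_cases:
  assumes "u < 2 * k"
  obtains b j where "b \<in> {0, k}" "j < k" "u = xy_cycle k b j"
proof -
  have "u \<in> xy_cycle k 0 ` {..<k} \<union> xy_cycle k k ` {..<k}"
    using assms lessThan_double_eq_xy_cycle_images by auto
  then show ?thesis using that by blast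
qed

lemma orb_januarial_y:
  assumes "u < 2 * k"
  shows "orb (januarial_y k) u = (if u < k then {..<k} else {k..<2 * k})"
proof -
  obtain b j where "b \<in> {0, k}" "j < k" "u = b + j"
    using below_double_cases[OF assms] .
  moreover from this have "orb (januarial_y k) u = (+) b ` {..<k}"
    using orb_cycle[where \<phi> = "(+) b", OF januarial_y_on_block] by blast
  ultimately show ?thesis
    by (cases "b = 0") (simp_all add: lessThan_atLeast0 mult_2)
qed

lemma januarial_y_maps_double: "januarial_y k ` {..<2 * k} \<subseteq> {..<2 * k}"
  using two_le_k by (auto simp: januarial_y_def)

lemma januarial_x_maps_double: "januarial_x k ` {..<2 * k} \<subseteq> {..<2 * k}"
  using two_le_k by (auto simp: januarial_x_def)

lemma januarial_x_involution: "januarial_x k (januarial_x k u) = u"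
  using two_le_k by (auto simp: januarial_x_def)

lemma januarial_y_order:
  assumes "u < 2 * k"
  shows "(januarial_y k ^^ k) u = u"
proof -
  obtain b j where "b \<in> {0, k}" "j < k" "u = b + j"
    using below_double_cases[OF assms] .
  then show ?thesis
    using funpow_cycle_length[where \<phi> = "(+) b", OF januarial_y_on_block] by blast
qed

lemma januarial_xy_order:
  assumes "u < 2 * k"
  shows "((januarial_y k \<circ> januarial_x k) ^^ k) u = u"
proof -
  obtain b j where "b \<in> {0, k}" "j < k" "u = xy_cycle k b j"
    using below_double_xy_cycle_cases[OF assms] .
  then show ?thesis using funpow_cycle_length[OF januarial_xy_on_xy_cycle] by blast
qed

lemma triangle_action_januarial: "triangle_action k k {..<2 * k} (januarial_x k) (januarial_y k)"
  unfolding triangle_action_def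
proof (intro conjI)
  show "bij_betw (januarial_x k) {..<2 * k} {..<2 * k}"
    by (rule bij_betw_if_funpow_id[OF januarial_x_maps_double, of 2])
      (simp_all add: numeral_2_eq_2 januarial_x_involution)
  show "bij_betw (januarial_y k) {..<2 * k} {..<2 * k}"
    by (rule bij_betw_if_funpow_id[OF januarial_y_maps_double, of k])
      (use two_le_k januarial_y_order in auto)
qed (simp_all add: januarial_x_involution januarial_y_order januarial_xy_order)

lemma xy_orbits_januarial:
  "xy_orbits {..<2 * k} (januarial_x k) (januarial_y k) = {xy_cycle k 0 ` {..<k}, xy_cycle k k ` {..<k}}"
proof
  show "xy_orbits {..<2 * k} (januarial_x k) (januarial_y k) \<subseteq> {xy_cycle k 0 ` {..<k}, xy_cycle k k ` {..<k}}"
  proof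
    fix Q assume "Q \<in> xy_orbits {..<2 * k} (januarial_x k) (januarial_y k)"
    then obtain u where "u < 2 * k" "Q = orb (januarial_y k \<circ> januarial_x k) u"
      unfolding xy_orbits_def by auto
    moreover from \<open>u < 2 * k\<close> obtain b j where "b \<in> {0, k}" "j < k" "u = xy_cycle k b j"
      by (rule below_double_xy_cycle_cases)
    ultimately show "Q \<in> {xy_cycle k 0 ` {..<k}, xy_cycle k k ` {..<k}}"
      using orb_cycle[OF januarial_xy_on_xy_cycle] by blast
  qed
  have "xy_cycle k b ` {..<k} \<in> xy_orbits {..<2 * k} (januarial_x k) (januarial_y k)"
    if "b \<in> {0, k}" for b
  proof -
    have "xy_cycle k b ` {..<k} = orb (januarial_y k \<circ> januarial_x k) (xy_cycle k b 0)"
      by (rule orb_cycle[OF januarial_xy_on_xy_cycle[OF that], symmetric]) (use two_le_k in simp)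
    moreover have "xy_cycle k b 0 \<in> {..<2 * k}"
      using that two_le_k by (auto simp: xy_cycle_def)
    ultimately show ?thesis unfolding xy_orbits_def by blast
  qed
  then show "{xy_cycle k 0 ` {..<k}, xy_cycle k k ` {..<k}} \<subseteq> xy_orbits {..<2 * k} (januarial_x k) (januarial_y k)"
    by simp
qed

lemma card_xy_cycle_image:
  assumes "b \<in> {0, k}"
  shows "card (xy_cycle k b ` {..<k}) = k"
proof -
  have "inj_on (xy_cycle k b) {..<k}"
    using assms by (auto simp: inj_on_def xy_cycle_def)
  then show ?thesis by (simp add: card_image)
qed

lemma xy_cycle_images_distinct: "xy_cycle k 0 ` {..<k} \<noteq> xy_cycle k k ` {..<k}"
proof -
  have "0 \<in> xy_cycle k 0 ` {..<k}"
    using two_le_k image_eqI[of 0 "xy_cycle k 0" 0] by (simp add: xy_cycle_def)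
  moreover have "0 \<notin> xy_cycle k k ` {..<k}"
    using two_le_k by (auto simp: xy_cycle_def)
  ultimately show ?thesis by blast
qed

lemma transitive_action_januarial: "transitive_action {..<2 * k} (januarial_x k) (januarial_y k)"
proof -
  let ?R = "{(w, januarial_x k w) | w. w \<in> {..<2 * k}} \<union> {(w, januarial_y k w) | w. w \<in> {..<2 * k}}"
  have y_step: "\<forall>w\<in>{..<2 * k}. (w, januarial_y k w) \<in> ?R" by blast
  have x_step: "(k, 0) \<in> ?R" "(0, k) \<in> ?R"
    using two_le_k by (auto simp: januarial_x_def)
  have y_path: "(u, v) \<in> ?R\<^sup>*" if "u < 2 * k" "v \<in> orb (januarial_y k) u" for u v
    using orb_in_rtrancl[OF januarial_y_maps_double y_step] that by simp
  have "(u, 0) \<in> ?R\<^sup>* \<and> (0, u) \<in> ?R\<^sup>*" if "u < 2 * k" for u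
  proof (cases "u < k")
    case True
    then show ?thesis using y_path[of u 0] y_path[of 0 u] that two_le_k orb_januarial_y by simp
  next
    case False
    then have "(u, k) \<in> ?R\<^sup>*" "(k, u) \<in> ?R\<^sup>*"
      using y_path[of u k] y_path[of k u] that two_le_k orb_januarial_y by simp_all
    then show ?thesis using x_step by (meson rtrancl_into_rtrancl converse_rtrancl_into_rtrancl)
  qed
  then show ?thesis
    unfolding transitive_action_def using two_le_k by (auto simp: lessThan_empty_iff intro: rtrancl_trans)
qed

lemma januarial_example: "januarial k {..<2 * k} (januarial_x k) (januarial_y k)"
proof -
  have "\<exists>l>0. triangle_action k l {..<2 * k} (januarial_x k) (januarial_y k)"
    using triangle_action_januarial two_le_k by (intro exI[of _ k]) simp
  moreover have "card {xy_cycle k 0 ` {..<k}, xy_cycle k k ` {..<k}} = 2"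
    using xy_cycle_images_distinct by simp
  moreover have "\<forall>Q\<in>{xy_cycle k 0 ` {..<k}, xy_cycle k k ` {..<k}}. 2 * card Q = card {..<2 * k}"
    using card_xy_cycle_image by simp
  ultimately show ?thesis
    unfolding januarial_def xy_orbits_januarial using transitive_action_januarial by blast
qed

lemma face_vertices_januarial:
  assumes "b \<in> {0, k}"
  shows "face_vertices (januarial_y k) (xy_cycle k b ` {..<k}) = {{..<k}, {k..<2 * k}}"
proof
  show "face_vertices (januarial_y k) (xy_cycle k b ` {..<k}) \<subseteq> {{..<k}, {k..<2 * k}}"
  proof
    fix c assume "c \<in> face_vertices (januarial_y k) (xy_cycle k b ` {..<k})"
    then obtain v where "v \<in> xy_cycle k b ` {..<k}" "c = orb (januarial_y k) v"
      unfolding face_vertices_def by blast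
    moreover have "xy_cycle k b ` {..<k} \<subseteq> {..<2 * k}"
      using lessThan_double_eq_xy_cycle_images assms by auto
    ultimately have "c = (if v < k then {..<k} else {k..<2 * k})"
      using orb_januarial_y[of v] by blast
    then show "c \<in> {{..<k}, {k..<2 * k}}" by simp
  qed
  have "b \<in> xy_cycle k b ` {..<k}" "k - b + 1 \<in> xy_cycle k b ` {..<k}"
    using xy_cycle_image[OF assms] by auto
  then have "{orb (januarial_y k) b, orb (januarial_y k) (k - b + 1)}
      \<subseteq> face_vertices (januarial_y k) (xy_cycle k b ` {..<k})"
    unfolding face_vertices_def by blast
  moreover have "{orb (januarial_y k) b, orb (januarial_y k) (k - b + 1)} = {{..<k}, {k..<2 * k}}"
    using assms two_le_k by (auto simp: orb_januarial_y insert_commute)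
  ultimately show "{{..<k}, {k..<2 * k}} \<subseteq> face_vertices (januarial_y k) (xy_cycle k b ` {..<k})"
    by metis
qed

lemma face_edges_januarial:
  assumes "b \<in> {0, k}"
  shows "face_edges (januarial_x k) (xy_cycle k b ` {..<k})
    = {{0, k}, {1, Suc k}} \<union> (\<lambda>v. {v}) ` {b + 2..<b + k}"
proof -
  let ?x = "januarial_x k"
  have "face_edges ?x (xy_cycle k b ` {..<k}) = (\<lambda>v. {v, ?x v}) ` ({b, k - b + 1} \<union> {b + 2..<b + k})"
    unfolding face_edges_def xy_cycle_image[OF assms] by blast
  also have "\<dots> = {{b, ?x b}, {k - b + 1, ?x (k - b + 1)}} \<union> (\<lambda>v. {v, ?x v}) ` {b + 2..<b + k}"
    by simp
  also have "(\<lambda>v. {v, ?x v}) ` {b + 2..<b + k} = (\<lambda>v. {v}) ` {b + 2..<b + k}"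
    using assms by (intro image_cong) (auto simp: januarial_x_def)
  also have "{{b, ?x b}, {k - b + 1, ?x (k - b + 1)}} = {{0, k}, {1, Suc k}}"
    using assms two_le_k by (auto simp: januarial_x_def insert_commute)
  finally show ?thesis .
qed

lemma common_edges_januarial:
  "common_edges (januarial_x k) (xy_cycle k 0 ` {..<k}) (xy_cycle k k ` {..<k}) = {{0, k}, {1, Suc k}}"
proof -
  have "(\<lambda>v. {v}) ` {0 + 2..<0 + k} \<inter> (\<lambda>v. {v}) ` {k + 2..<k + k} = {}"
    by auto
  moreover have "0 \<in> {0, k}" "k \<in> {0, k}" by simp_all
  ultimately show ?thesis
    unfolding common_edges_def by (simp only: face_edges_januarial Un_Int_distrib) simp
qed

lemma edge_ends_januarial:
  assumes "u < k"
  shows "edge_ends (januarial_y k) {u, k + u} = {{..<k}, {k..<2 * k}}"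
proof -
  have "edge_ends (januarial_y k) {u, k + u} = {orb (januarial_y k) u, orb (januarial_y k) (k + u)}"
    unfolding edge_ends_def by blast
  then show ?thesis using assms by (simp add: orb_januarial_y)
qed

lemma common_graph_januarial_simple_circuit:
  "simple_circuit
     (common_vertices (januarial_y k) (xy_cycle k 0 ` {..<k}) (xy_cycle k k ` {..<k}))
     (common_edges (januarial_x k) (xy_cycle k 0 ` {..<k}) (xy_cycle k k ` {..<k}))
     (edge_ends (januarial_y k))"
proof -
  have "0 \<in> {0, k}" "k \<in> {0, k}" by simp_all
  then have vertices: "common_vertices (januarial_y k) (xy_cycle k 0 ` {..<k}) (xy_cycle k k ` {..<k})
      = {{..<k}, {k..<2 * k}}"
    unfolding common_vertices_def by (simp only: face_vertices_januarial Int_absorb)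
  have ends: "edge_ends (januarial_y k) {0, k} = {{..<k}, {k..<2 * k}}"
    "edge_ends (januarial_y k) {1, Suc k} = {{..<k}, {k..<2 * k}}"
    using edge_ends_januarial[of 0] edge_ends_januarial[of 1] two_le_k by simp_all
  have "0 \<in> {..<k}" "0 \<notin> {k..<2 * k}" "0 \<in> {0, k}" "0 \<notin> {1, Suc k}"
    using two_le_k by simp_all
  then have "{..<k} \<noteq> {k..<2 * k}" "{0, k} \<noteq> {1, Suc k}"
    by blast+
  then show ?thesis
    unfolding vertices common_edges_januarial using ends by (rule simple_circuit_two_edges)
qed

end

theorem theorem2:
  fixes k :: nat
  assumes "k \<ge> 2"
  shows "\<exists>S x y. januarial_simple_h1 k S x y"
proof -
  have "januarial_simple_h1 k {..<2 * k} (januarial_x k) (januarial_y k)"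
    unfolding januarial_simple_h1_def xy_orbits_januarial[OF assms]
    using januarial_example[OF assms] xy_cycle_images_distinct[OF assms]
      common_graph_januarial_simple_circuit[OF assms] by blast
  then show ?thesis by blast
qed

end
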